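(* Let all hypotheses of the following setting hold: $(\Omega,\mathcal{F},P)$ is a probability space, $(\mathcal{F}_n)_{n\ge1}$ an increasing sequence of sub-$\sigma$-algebras of $\mathcal{F}$; $X_n$ are $\mathcal{F}_n$-measurable real random variables, $T_n$ are $\mathcal{F}_n$-measurable real random variables, $W_n$ are $\mathcal{F}_{n+1}$-measurable real random variables with $X_{n+1}=T_n+W_n$, $\mathbb{E}[W_n\mid\mathcal{F}_n]=0$ a.s., and $\sum_{n}\mathbb{E}[W_n^2]<\infty$; $\alpha_n,\beta_n,\gamma_n:\Omega\to\mathbb{R}$ are nonnegative functions such that almost surely $\alpha_n\to0$, $\sum_n\beta_n<\infty$ and $\sum_n\gamma_n=\infty$. Suppose that for some $x_*\in\mathbb{R}$, for all $n\ge1$ and all $\omega\in\Omega$, $$|T_n(\omega)-x_*|\le\max\big(\alpha_n(\omega),\,(1+\beta_n(\omega)-\gamma_n(\omega))|X_n(\omega)-x_*|\big).$$ Then $X_n\to x_*$ almost surely.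
   Context: $\mathbb{E}[\,\cdot\mid\mathcal{F}_n]$ denotes conditional expectation with respect to $\mathcal{F}_n$. *)

theory Defs
  imports "HOL-Probability.Probability"
begin

end

theory Submission
  imports Defs
begin

text \<open>
  Fix \<open>\<epsilon> > 0\<close> and put \<open>e\<^sub>n = |X\<^sub>n - x\<^sub>*|\<close>. Once \<open>\<alpha>\<^sub>n < \<epsilon>\<close>, a step with \<open>|T\<^sub>n - x\<^sub>*| < \<epsilon>\<close>
  lands within \<open>2\<epsilon>\<close> of \<open>x\<^sub>*\<close>, while on any other step the contraction bound gives
  \<open>e\<^sub>n\<^sub>+\<^sub>1 \<le> (1 + \<beta>\<^sub>n - \<gamma>\<^sub>n) e\<^sub>n + s\<^sub>n W\<^sub>n + 2 W\<^sub>n\<^sup>2 / \<epsilon>\<close>, where \<open>s\<^sub>n\<close> is the sign of \<open>T\<^sub>n - x\<^sub>*\<close>.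
  The multiplier \<open>s\<^sub>n\<close> is \<open>F\<^sub>n\<close>-measurable and bounded, so \<open>\<Sum> s\<^sub>n W\<^sub>n\<close> is a martingale transform with
  summable second moments and converges almost surely by Kolmogorov's maximal inequality;
  likewise \<open>\<Sum> W\<^sub>n\<^sup>2 < \<infinity>\<close> almost surely. Pathwise, a Robbins--Siegmund type argument then shows
  first that \<open>e\<^sub>n\<close> stays bounded and next, since \<open>\<Sum> \<gamma>\<^sub>n = \<infinity>\<close> forbids staying away from \<open>x\<^sub>*\<close>
  forever, that eventually \<open>e\<^sub>n \<le> 3\<epsilon>\<close>. Countably many \<open>\<epsilon>\<close> suffice.
\<close>

definition cutoff_sgn :: "real \<Rightarrow> real \<Rightarrow> real" where
  "cutoff_sgn \<epsilon> t = (if \<epsilon> \<le> \<bar>t\<bar> then sgn t else 0)"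

lemma abs_cutoff_sgn_le_1: "\<bar>cutoff_sgn \<epsilon> t\<bar> \<le> 1"
  by (simp add: cutoff_sgn_def sgn_if)

lemma abs_add_le_sgn_mult_add:
  fixes t w \<epsilon> :: real
  assumes "\<epsilon> > 0" "\<epsilon> \<le> \<bar>t\<bar>"
  shows "\<bar>t + w\<bar> \<le> \<bar>t\<bar> + sgn t * w + 2 * w\<^sup>2 / \<epsilon>"
proof (cases "\<bar>w\<bar> \<le> \<bar>t\<bar>")
  case True
  then have "\<bar>t + w\<bar> = \<bar>t\<bar> + sgn t * w"
    using assms by (cases "t > 0") (auto simp: sgn_if abs_if)
  moreover have "w\<^sup>2 / \<epsilon> \<ge> 0" using assms by auto
  ultimately show ?thesis by linarith
next
  case False
  then have "\<epsilon> * \<bar>w\<bar> \<le> \<bar>w\<bar> * \<bar>w\<bar>" using assms by (intro mult_right_mono) auto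
  then have "\<bar>w\<bar> \<le> w\<^sup>2 / \<epsilon>" using assms by (simp add: field_simps power2_eq_square mult.commute)
  moreover have "\<bar>sgn t * w\<bar> \<le> \<bar>w\<bar>" by (simp add: abs_mult abs_sgn_eq)
  ultimately show ?thesis using abs_triangle_ineq[of t w] abs_ge_minus_self[of "sgn t * w"] by linarith
qed

lemma le_exp_suminf_of_recursion:
  fixes h \<beta> b :: "nat \<Rightarrow> real"
  assumes \<beta>_nonneg: "\<And>n. 0 \<le> \<beta> n" and \<beta>_summable: "summable \<beta>"
    and b_nonneg: "\<And>n. 0 \<le> b n" and b_summable: "summable b"
    and "0 \<le> K" and "h N \<le> K"
    and step: "\<And>n. n \<ge> N \<Longrightarrow> h (Suc n) \<le> max K ((1 + \<beta> n) * h n + b n)"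
    and "n \<ge> N"
  shows "h n \<le> exp (suminf \<beta>) * (K + suminf b)"
proof -
  define P where "P n = (\<Prod>k\<in>{N..<n}. 1 + \<beta> k)" for n
  define S where "S n = (\<Sum>k\<in>{N..<n}. b k)" for n
  have P_ge_1: "1 \<le> P n" for n unfolding P_def using \<beta>_nonneg by (intro prod_ge_1) auto
  have S_nonneg: "0 \<le> S n" for n unfolding S_def using b_nonneg by (intro sum_nonneg) auto
  have "h n \<le> P n * (K + S n)" using \<open>n \<ge> N\<close>
  proof (induction n rule: dec_induct)
    case base
    then show ?case unfolding P_def S_def using \<open>h N \<le> K\<close> by simp
  next
    case (step n)
    have P_Suc: "P (Suc n) = (1 + \<beta> n) * P n" and S_Suc: "S (Suc n) = S n + b n"
      unfolding P_def S_def using step(1) by (simp_all add: prod.atLeastLessThan_Suc mult.commute)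
    have "1 \<le> (1 + \<beta> n) * P n" using mult_mono[of 1 "1 + \<beta> n" 1 "P n"] P_ge_1 \<beta>_nonneg by auto
    then have "b n \<le> (1 + \<beta> n) * P n * b n" using mult_right_mono b_nonneg by fastforce
    then have "(1 + \<beta> n) * h n + b n \<le> P (Suc n) * (K + S (Suc n))"
      using mult_left_mono[OF step(3), of "1 + \<beta> n"] \<beta>_nonneg[of n]
      unfolding P_Suc S_Suc by (simp add: algebra_simps)
    moreover have "K \<le> P (Suc n) * (K + S (Suc n))"
      using mult_mono[OF P_ge_1[of "Suc n"], of K "K + S (Suc n)"] S_nonneg[of "Suc n"] P_ge_1[of "Suc n"]
        \<open>0 \<le> K\<close> by simp
    ultimately show ?case using step.hyps(1) \<open>\<And>n. n \<ge> N \<Longrightarrow> _\<close> by fastforce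
  qed
  also have "\<dots> \<le> exp (suminf \<beta>) * (K + suminf b)"
  proof (intro mult_mono add_left_mono)
    have "P n \<le> (\<Prod>k\<in>{N..<n}. exp (\<beta> k))" unfolding P_def
      using \<beta>_nonneg by (intro prod_mono) (auto simp: add_nonneg_nonneg exp_ge_add_one_self)
    also have "\<dots> = exp (\<Sum>k\<in>{N..<n}. \<beta> k)" by (simp add: exp_sum)
    also have "\<dots> \<le> exp (suminf \<beta>)" using sum_le_suminf[OF \<beta>_summable] \<beta>_nonneg by simp
    finally show "P n \<le> exp (suminf \<beta>)" .
    show "S n \<le> suminf b" unfolding S_def using sum_le_suminf[OF b_summable] b_nonneg by simp
  qed (use \<open>0 \<le> K\<close> S_nonneg in auto)
  finally show ?thesis .
qed

lemma eventually_bounded_of_perturbed_growth: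
  fixes e u b \<beta> \<gamma> :: "nat \<Rightarrow> real" and A :: "nat \<Rightarrow> bool"
  assumes e_nonneg: "\<forall>n\<ge>N. 0 \<le> e n"
    and \<beta>_nonneg: "\<forall>n. 0 \<le> \<beta> n" and \<beta>_summable: "summable \<beta>" and \<gamma>_nonneg: "\<forall>n. 0 \<le> \<gamma> n"
    and b_nonneg: "\<forall>n. 0 \<le> b n" and b_summable: "summable b" and u_summable: "summable u"
    and active: "\<forall>n\<ge>N. A n \<longrightarrow> e (Suc n) \<le> (1 + \<beta> n - \<gamma> n) * e n + u n + b n"
    and inactive: "\<forall>n\<ge>N. \<not> A n \<longrightarrow> e (Suc n) \<le> C"
  shows "\<exists>E N'. \<forall>n\<ge>N'. e n \<le> E"
proof -
  obtain N' where N': "N' \<ge> N" "\<forall>n. \<bar>\<Sum>k\<in>{N'..<n}. u k\<bar> < 1"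
    using u_summable[unfolded summable_Cauchy] by (metis real_norm_def zero_less_one nle_le)
  \<comment> \<open>Absorbing the partial sums of \<open>u\<close> into \<open>H\<close> leaves a recursion with nonnegative perturbation \<open>b\<close>.\<close>
  define H where "H n = e n - (\<Sum>k\<in>{N'..<n}. u k) + 1" for n
  define K where "K = max (H N') (C + 2)"
  have e_le_H: "e n \<le> H n" for n using N'(2)[rule_format, of n] unfolding H_def by linarith
  have H_Suc: "H (Suc n) \<le> max K ((1 + \<beta> n) * H n + b n)" if "n \<ge> N'" for n
  proof (cases "A n")
    case True
    have "n \<ge> N" using \<open>N' \<ge> N\<close> that by simp
    have "\<gamma> n * e n \<ge> 0" "\<beta> n * e n \<le> \<beta> n * H n"
      using \<gamma>_nonneg \<beta>_nonneg e_nonneg e_le_H \<open>n \<ge> N\<close> by (auto intro: mult_left_mono)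
    then have "H (Suc n) \<le> (1 + \<beta> n) * H n + b n"
      using active[rule_format, OF \<open>n \<ge> N\<close> True] that unfolding H_def by (simp add: algebra_simps)
    then show ?thesis by simp
  next
    case False
    have "n \<ge> N" using \<open>N' \<ge> N\<close> that by simp
    then have "H (Suc n) \<le> C + 2"
      using inactive False N'(2)[rule_format, of "Suc n"] unfolding H_def by fastforce
    then show ?thesis unfolding K_def by simp
  qed
  have "0 \<le> K" unfolding K_def H_def using e_nonneg \<open>N' \<ge> N\<close> by auto
  then have "e n \<le> exp (suminf \<beta>) * (K + suminf b)" if "n \<ge> N'" for n
    using e_le_H[of n] le_exp_suminf_of_recursion[of \<beta> b K H N' n] H_Suc that
      \<beta>_nonneg \<beta>_summable b_nonneg b_summable unfolding K_def by fastforce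
  then show ?thesis by blast
qed

\<comment> \<open>An infinite run of active steps would bound the partial sums of the divergent series \<open>\<gamma>\<close>.\<close>
lemma ex_inactive_of_descent:
  fixes e r \<gamma> :: "nat \<Rightarrow> real" and A :: "nat \<Rightarrow> bool"
  assumes e_nonneg: "\<forall>n\<ge>N. 0 \<le> e n" and r_summable: "summable r"
    and \<gamma>_nonneg: "\<forall>n. 0 \<le> \<gamma> n" and \<gamma>_divergent: "\<not> summable \<gamma>" and "c > 0"
    and descent: "\<forall>n\<ge>N. A n \<longrightarrow> e (Suc n) - e n \<le> r n - c * \<gamma> n"
  shows "\<exists>n\<ge>N. \<not> A n"
proof (rule ccontr)
  assume "\<not> ?thesis"
  then have active: "\<forall>n\<ge>N. A n" by auto
  obtain N' where N': "N' \<ge> N" "\<forall>n. \<bar>\<Sum>k\<in>{N'..<n}. r k\<bar> < 1"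
    using r_summable[unfolded summable_Cauchy] by (metis real_norm_def zero_less_one nle_le)
  have "c * (\<Sum>k\<in>{N'..<n + N'}. \<gamma> k) \<le> e N' + 1" for n
  proof -
    have "e (n + N') - e N' = (\<Sum>k\<in>{N'..<n + N'}. e (Suc k) - e k)"
      by (rule sum_Suc_diff'[symmetric]) simp
    also have "\<dots> \<le> (\<Sum>k\<in>{N'..<n + N'}. r k - c * \<gamma> k)"
      using descent active N'(1) by (intro sum_mono) auto
    finally have "e (n + N') - e N' \<le> (\<Sum>k\<in>{N'..<n + N'}. r k) - c * (\<Sum>k\<in>{N'..<n + N'}. \<gamma> k)"
      by (simp add: sum_subtractf sum_distrib_left)
    moreover have "0 \<le> e (n + N')" using e_nonneg N'(1) by simp
    moreover have "(\<Sum>k\<in>{N'..<n + N'}. r k) < 1" using N'(2)[rule_format, of "n + N'"] by simp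
    ultimately show ?thesis by linarith
  qed
  moreover have "(\<Sum>k\<in>{N'..<n + N'}. \<gamma> k) = (\<Sum>i<n. \<gamma> (i + N'))" for n
    by (metis add_0 atLeast0LessThan sum.shift_bounds_nat_ivl)
  ultimately have "(\<Sum>i<n. \<gamma> (i + N')) \<le> (e N' + 1) / c" for n
    using \<open>c > 0\<close> by (metis mult.commute pos_le_divide_eq)
  then have "summable (\<lambda>k. \<gamma> (k + N'))"
    using \<gamma>_nonneg by (intro summableI_nonneg_bounded) auto
  then show False using \<gamma>_divergent summable_iff_shift by blast
qed

lemma eventually_le_of_perturbed_descent:
  fixes e u b \<beta> \<gamma> :: "nat \<Rightarrow> real" and A :: "nat \<Rightarrow> bool"
  assumes e_nonneg: "\<forall>n\<ge>N. 0 \<le> e n" and e_bounded: "\<forall>n\<ge>N. e n \<le> E"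
    and \<beta>_nonneg: "\<forall>n. 0 \<le> \<beta> n" and \<beta>_summable: "summable \<beta>"
    and \<gamma>_nonneg: "\<forall>n. 0 \<le> \<gamma> n" and \<gamma>_divergent: "\<not> summable \<gamma>"
    and b_summable: "summable b" and u_summable: "summable u" and "c > 0" and "\<eta> > 0"
    and active: "\<forall>n\<ge>N. A n \<longrightarrow> e (Suc n) \<le> (1 + \<beta> n - \<gamma> n) * e n + u n + b n"
    and active_large: "\<forall>n\<ge>N. A n \<longrightarrow> c \<le> e n"
    and inactive: "\<forall>n\<ge>N. \<not> A n \<longrightarrow> e (Suc n) \<le> C"
  shows "\<exists>N'. \<forall>n\<ge>N'. e n \<le> C + \<eta>"
proof -
  define r where "r n = \<beta> n * E + b n + u n" for n
  have "summable r" unfolding r_def using \<beta>_summable b_summable u_summable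
    by (intro summable_add summable_mult2) auto
  then obtain N' where N': "N' \<ge> N" "\<forall>m\<ge>N'. \<forall>n. \<bar>\<Sum>k\<in>{m..<n}. r k\<bar> < \<eta>"
    unfolding summable_Cauchy using \<open>\<eta> > 0\<close> by (metis real_norm_def le_cases le_trans)
  have descent: "e (Suc n) - e n \<le> r n - c * \<gamma> n" if "n \<ge> N" "A n" for n
  proof -
    have "\<beta> n * e n \<le> \<beta> n * E" "\<gamma> n * c \<le> \<gamma> n * e n"
      using that e_bounded \<beta>_nonneg \<gamma>_nonneg active_large by (auto intro: mult_left_mono)
    then show ?thesis using active that unfolding r_def by (auto simp: algebra_simps)
  qed
  have telescope: "e m \<le> e j + (\<Sum>k\<in>{j..<m}. r k) - c * (\<Sum>k\<in>{j..<m}. \<gamma> k)"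
    if "N \<le> j" "j \<le> m" "\<forall>k\<in>{j..<m}. A k" for j m
  proof -
    have "e m - e j = (\<Sum>k\<in>{j..<m}. e (Suc k) - e k)" by (rule sum_Suc_diff'[OF \<open>j \<le> m\<close>, symmetric])
    also have "\<dots> \<le> (\<Sum>k\<in>{j..<m}. r k - c * \<gamma> k)" using that by (intro sum_mono descent) auto
    finally show ?thesis by (simp add: sum_subtractf sum_distrib_left)
  qed
  have "\<exists>n0\<ge>N'. \<not> A n0"
    using e_nonneg descent \<open>summable r\<close> \<gamma>_nonneg \<gamma>_divergent \<open>c > 0\<close> N'(1)
    by (intro ex_inactive_of_descent[where e=e and r=r and \<gamma>=\<gamma> and c=c]) auto
  then obtain n0 where n0: "n0 \<ge> N'" "\<not> A n0" by auto
  have "e m \<le> C + \<eta>" if "m > n0" for m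
  proof -
    let ?I = "{k \<in> {n0..<m}. \<not> A k}"
    define k0 where "k0 = Max ?I"
    have "finite ?I" "n0 \<in> ?I" using n0 that by auto
    then have "k0 \<in> ?I" unfolding k0_def by (intro Max_in) auto
    then have k0: "k0 \<in> {n0..<m}" "\<not> A k0" by auto
    have last: "\<forall>k\<in>{Suc k0..<m}. A k"
    proof (rule ballI, rule ccontr)
      fix k assume k: "k \<in> {Suc k0..<m}" and "\<not> A k"
      then have "k \<in> ?I" using k0 by auto
      then have "k \<le> k0" unfolding k0_def using \<open>finite ?I\<close> by (intro Max_ge)
      then show False using k by simp
    qed
    have "e (Suc k0) \<le> C" using inactive k0 n0 N' by auto
    moreover have "c * (\<Sum>k\<in>{Suc k0..<m}. \<gamma> k) \<ge> 0"
      using \<gamma>_nonneg \<open>c > 0\<close> by (intro mult_nonneg_nonneg sum_nonneg) auto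
    moreover have "Suc k0 \<ge> N'" using k0 n0 by simp
    then have "(\<Sum>k\<in>{Suc k0..<m}. r k) < \<eta>" using N'(2) by (simp add: abs_less_iff)
    ultimately show ?thesis using telescope[of "Suc k0" m] k0 n0 N' last by fastforce
  qed
  then show ?thesis by (meson Suc_le_eq)
qed

lemma eventually_dist_le_of_perturbed_contraction:
  fixes x t w \<alpha> \<beta> \<gamma> :: "nat \<Rightarrow> real" and c \<epsilon> :: real
  assumes rec: "\<And>n. x (Suc n) = t n + w n"
    and bound: "\<And>n. \<bar>t n - c\<bar> \<le> max (\<alpha> n) ((1 + \<beta> n - \<gamma> n) * \<bar>x n - c\<bar>)"
    and nonneg: "\<And>n. 0 \<le> \<alpha> n \<and> 0 \<le> \<beta> n \<and> 0 \<le> \<gamma> n"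
    and \<alpha>_lim: "\<alpha> \<longlonglongrightarrow> 0" and \<beta>_summable: "summable \<beta>" and \<gamma>_divergent: "\<not> summable \<gamma>"
    and w_sq_summable: "summable (\<lambda>n. (w n)\<^sup>2)"
    and noise_summable: "summable (\<lambda>n. cutoff_sgn \<epsilon> (t n - c) * w n)"
    and "\<epsilon> > 0"
  shows "\<exists>N. \<forall>n\<ge>N. \<bar>x n - c\<bar> \<le> 3 * \<epsilon>"
proof -
  define e where "e n = \<bar>x n - c\<bar>" for n
  define A where "A n = (\<epsilon> \<le> \<bar>t n - c\<bar>)" for n
  define b where "b n = 2 * (w n)\<^sup>2 / \<epsilon>" for n
  have b_summable: "summable b" unfolding b_def using w_sq_summable by (intro summable_divide summable_mult)
  have "\<forall>\<^sub>F n in sequentially. \<alpha> n < \<epsilon>"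
    using \<alpha>_lim \<open>\<epsilon> > 0\<close> by (rule order_tendstoD)
  moreover have "\<forall>\<^sub>F n in sequentially. \<beta> n < 1"
    using summable_LIMSEQ_zero[OF \<beta>_summable] by (rule order_tendstoD) simp
  moreover have "\<forall>\<^sub>F n in sequentially. \<bar>w n\<bar> < \<epsilon>"
  proof -
    have "\<forall>\<^sub>F n in sequentially. (w n)\<^sup>2 < \<epsilon>\<^sup>2"
      using summable_LIMSEQ_zero[OF w_sq_summable] by (rule order_tendstoD) (use \<open>\<epsilon> > 0\<close> in auto)
    then show ?thesis
      by eventually_elim (use \<open>\<epsilon> > 0\<close> in \<open>simp add: abs_less_iff power2_less_imp_less\<close>)
  qed
  ultimately have "\<forall>\<^sub>F n in sequentially. \<alpha> n < \<epsilon> \<and> \<beta> n < 1 \<and> \<bar>w n\<bar> < \<epsilon>"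
    by eventually_elim auto
  then obtain N where N: "\<forall>n\<ge>N. \<alpha> n < \<epsilon> \<and> \<beta> n < 1 \<and> \<bar>w n\<bar> < \<epsilon>"
    unfolding eventually_sequentially by blast
  have e_Suc: "e (Suc n) = \<bar>(t n - c) + w n\<bar>" for n unfolding e_def rec by (simp add: algebra_simps)
  have contraction: "\<bar>t n - c\<bar> \<le> (1 + \<beta> n - \<gamma> n) * e n" if "n \<ge> N" "A n" for n
    using bound[of n] N that unfolding A_def e_def by fastforce
  have active: "\<forall>n\<ge>N. A n \<longrightarrow> e (Suc n) \<le> (1 + \<beta> n - \<gamma> n) * e n + cutoff_sgn \<epsilon> (t n - c) * w n + b n"
  proof (intro allI impI)
    fix n assume "n \<ge> N" "A n"
    then show "e (Suc n) \<le> (1 + \<beta> n - \<gamma> n) * e n + cutoff_sgn \<epsilon> (t n - c) * w n + b n"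
      using abs_add_le_sgn_mult_add[OF \<open>\<epsilon> > 0\<close>, of "t n - c" "w n"] contraction[of n]
      unfolding e_Suc A_def cutoff_sgn_def b_def by simp
  qed
  have active_large: "\<forall>n\<ge>N. A n \<longrightarrow> \<epsilon> / 2 \<le> e n"
  proof (intro allI impI)
    fix n assume "n \<ge> N" "A n"
    then have "(1 + \<beta> n - \<gamma> n) * e n \<le> 2 * e n"
      using N nonneg[of n] unfolding e_def by (intro mult_right_mono) auto
    then show "\<epsilon> / 2 \<le> e n" using contraction[OF \<open>n \<ge> N\<close> \<open>A n\<close>] \<open>A n\<close> unfolding A_def by auto
  qed
  have inactive: "\<forall>n\<ge>N. \<not> A n \<longrightarrow> e (Suc n) \<le> 2 * \<epsilon>"
  proof (intro allI impI)
    fix n assume "n \<ge> N" "\<not> A n"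
    then show "e (Suc n) \<le> 2 * \<epsilon>"
      using N abs_triangle_ineq[of "t n - c" "w n"] unfolding e_Suc A_def by fastforce
  qed
  have e_nonneg: "\<forall>n\<ge>N. 0 \<le> e n" unfolding e_def by auto
  have b_nonneg: "\<forall>n. 0 \<le> b n" unfolding b_def using \<open>\<epsilon> > 0\<close> by auto
  obtain E N' where E: "\<forall>n\<ge>N'. e n \<le> E"
    using eventually_bounded_of_perturbed_growth[OF e_nonneg _ \<beta>_summable _ b_nonneg b_summable
        noise_summable active inactive] nonneg by blast
  have "\<exists>N''. \<forall>n\<ge>N''. e n \<le> 2 * \<epsilon> + \<epsilon>"
    by (rule eventually_le_of_perturbed_descent[where N="max N N'" and E=E and A=A and c="\<epsilon> / 2"
          and u="\<lambda>n. cutoff_sgn \<epsilon> (t n - c) * w n" and b=b and \<beta>=\<beta> and \<gamma>=\<gamma>])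
      (use e_nonneg E nonneg \<beta>_summable \<gamma>_divergent b_summable noise_summable active
        active_large inactive \<open>\<epsilon> > 0\<close> in auto)
  then show ?thesis unfolding e_def by auto
qed

lemma tendsto_of_perturbed_contraction:
  fixes x t w \<alpha> \<beta> \<gamma> :: "nat \<Rightarrow> real" and c :: real
  assumes "\<And>n. x (Suc n) = t n + w n"
    and "\<And>n. \<bar>t n - c\<bar> \<le> max (\<alpha> n) ((1 + \<beta> n - \<gamma> n) * \<bar>x n - c\<bar>)"
    and "\<And>n. 0 \<le> \<alpha> n \<and> 0 \<le> \<beta> n \<and> 0 \<le> \<gamma> n"
    and "\<alpha> \<longlonglongrightarrow> 0" and "summable \<beta>" and "\<not> summable \<gamma>" and "summable (\<lambda>n. (w n)\<^sup>2)"
    \<comment> \<open>Countably many cutoffs suffice, so in the stochastic setting this holds almost surely.\<close>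
    and noise_summable: "\<And>p::nat. summable (\<lambda>n. cutoff_sgn (1 / Suc p) (t n - c) * w n)"
  shows "x \<longlonglongrightarrow> c"
proof (rule LIMSEQ_I)
  fix r :: real assume "0 < r"
  then obtain p :: nat where "inverse (Suc p) < r / 3"
    using reals_Archimedean by (metis divide_pos_pos zero_less_numeral)
  then have p: "3 * (1 / Suc p) < r" by (simp add: field_simps)
  obtain N where "\<forall>n\<ge>N. \<bar>x n - c\<bar> \<le> 3 * (1 / Suc p)"
    using eventually_dist_le_of_perturbed_contraction[OF assms(1-7) noise_summable] by fastforce
  then show "\<exists>N. \<forall>n\<ge>N. norm (x n - c) < r" using p by force
qed

lemma integrable_mult_of_square_integrable:
  fixes f g :: "'a \<Rightarrow> real"
  assumes [measurable]: "f \<in> borel_measurable M" "g \<in> borel_measurable M"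
    and "integrable M (\<lambda>x. (f x)\<^sup>2)" "integrable M (\<lambda>x. (g x)\<^sup>2)"
  shows "integrable M (\<lambda>x. f x * g x)"
proof (rule Bochner_Integration.integrable_bound[of _ "\<lambda>x. (f x)\<^sup>2 + (g x)\<^sup>2"])
  show "integrable M (\<lambda>x. (f x)\<^sup>2 + (g x)\<^sup>2)" using assms by auto
  have "\<bar>f x * g x\<bar> \<le> (f x)\<^sup>2 + (g x)\<^sup>2" for x
  proof -
    have "2 * (\<bar>f x\<bar> * \<bar>g x\<bar>) \<le> (f x)\<^sup>2 + (g x)\<^sup>2"
      using sum_squares_bound[of "\<bar>f x\<bar>" "\<bar>g x\<bar>"] by (simp add: mult.assoc)
    moreover have "0 \<le> \<bar>f x\<bar> * \<bar>g x\<bar>" by simp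
    ultimately show ?thesis unfolding abs_mult by linarith
  qed
  then show "AE x in M. norm (f x * g x) \<le> norm ((f x)\<^sup>2 + (g x)\<^sup>2)" by simp
qed measurable

lemma nn_integral_suminf_finite:
  fixes f :: "nat \<Rightarrow> 'a \<Rightarrow> real"
  assumes [measurable]: "\<And>n. f n \<in> borel_measurable M" and nonneg: "\<And>n x. 0 \<le> f n x"
    and finite: "(\<Sum>n. \<integral>\<^sup>+ x. ennreal (f n x) \<partial>M) < \<infinity>"
  shows integrable_of_nn_integral_suminf_finite: "\<And>n. integrable M (f n)"
    and summable_integral_of_nn_integral_suminf_finite: "summable (\<lambda>n. \<integral>x. f n x \<partial>M)"
    and AE_summable_of_nn_integral_suminf_finite: "AE x in M. summable (\<lambda>n. f n x)"
proof -
  show integrable: "integrable M (f n)" for n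
    using ennreal_suminf_lessD[OF finite, of n] nonneg
    by (intro integrableI_nonneg) (auto simp: less_top)
  have "(\<integral>\<^sup>+ x. ennreal (f n x) \<partial>M) = ennreal (\<integral>x. f n x \<partial>M)" for n
    using integrable nonneg by (intro nn_integral_eq_integral) auto
  then show "summable (\<lambda>n. \<integral>x. f n x \<partial>M)"
    using finite nonneg by (intro summable_suminf_not_top) auto
  have "(\<integral>\<^sup>+ x. (\<Sum>n. ennreal (f n x)) \<partial>M) = (\<Sum>n. \<integral>\<^sup>+ x. ennreal (f n x) \<partial>M)"
    by (rule nn_integral_suminf) simp
  then have "AE x in M. (\<Sum>n. ennreal (f n x)) \<noteq> \<infinity>"
    using finite by (intro nn_integral_PInf_AE) auto
  then show "AE x in M. summable (\<lambda>n. f n x)"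
    by eventually_elim (use nonneg in \<open>auto intro: summable_suminf_not_top\<close>)
qed

locale filtered_prob_space = prob_space M for M :: "'a measure" +
  fixes F :: "nat \<Rightarrow> 'a measure"
  assumes subalgebra_F: "\<And>n. subalgebra M (F n)"
    and sets_F_Suc: "\<And>n. sets (F n) \<subseteq> sets (F (Suc n))"
begin

lemma sets_F_mono: "i \<le> j \<Longrightarrow> sets (F i) \<subseteq> sets (F j)"
  by (induction j rule: dec_induct) (use sets_F_Suc in blast)+

lemma measurable_F_mono: "f \<in> borel_measurable (F i) \<Longrightarrow> i \<le> j \<Longrightarrow> f \<in> borel_measurable (F j)"
  by (rule measurable_from_subalg[of "F j" "F i"])
    (use subalgebra_F[of i] subalgebra_F[of j] sets_F_mono[of i j] in \<open>auto simp: subalgebra_def\<close>)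

lemma measurable_F_imp_borel: "f \<in> borel_measurable (F i) \<Longrightarrow> f \<in> borel_measurable M"
  by (rule measurable_from_subalg[OF subalgebra_F])

lemma sigma_finite_subalgebra_F: "sigma_finite_subalgebra M (F n)"
  by (rule finite_measure_subalgebra_is_sigma_finite) (unfold_locales, rule subalgebra_F)

end

locale square_summable_martingale_differences = filtered_prob_space +
  fixes Y :: "nat \<Rightarrow> 'a \<Rightarrow> real"
  assumes measurable_Y: "\<And>n. Y n \<in> borel_measurable (F (Suc n))"
    and cond_exp_Y: "\<And>n. AE \<omega> in M. real_cond_exp M (F n) (Y n) \<omega> = 0"
    and integrable_Y_sq: "\<And>n. integrable M (\<lambda>\<omega>. (Y n \<omega>)\<^sup>2)"
    and summable_Y_sq: "summable (\<lambda>n. \<integral>\<omega>. (Y n \<omega>)\<^sup>2 \<partial>M)"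
begin

lemma borel_measurable_Y[measurable]: "Y n \<in> borel_measurable M"
  using measurable_F_imp_borel[OF measurable_Y] .

lemma integral_mult_Y_eq_0:
  assumes Z_meas: "Z \<in> borel_measurable (F j)" and Z_sq: "integrable M (\<lambda>\<omega>. (Z \<omega>)\<^sup>2)" and "j \<le> k"
  shows "(\<integral>\<omega>. Z \<omega> * Y k \<omega> \<partial>M) = 0"
proof -
  have [measurable]: "Z \<in> borel_measurable (F k)" "Z \<in> borel_measurable M"
    using measurable_F_mono[OF Z_meas \<open>j \<le> k\<close>] measurable_F_imp_borel[OF Z_meas] .
  have "integrable M (\<lambda>\<omega>. Z \<omega> * Y k \<omega>)"
    using Z_sq integrable_Y_sq by (intro integrable_mult_of_square_integrable) auto
  then have "(\<integral>\<omega>. Z \<omega> * Y k \<omega> \<partial>M) = (\<integral>\<omega>. Z \<omega> * real_cond_exp M (F k) (Y k) \<omega> \<partial>M)"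
    by (simp add: sigma_finite_subalgebra.real_cond_exp_intg(2)[OF sigma_finite_subalgebra_F])
  also have "\<dots> = (\<integral>\<omega>. 0 \<partial>M)"
    by (rule integral_cong_AE) (use cond_exp_Y[of k] in auto)
  finally show ?thesis by simp
qed

definition block_sum :: "nat \<Rightarrow> nat \<Rightarrow> 'a \<Rightarrow> real" where
  "block_sum n m \<omega> = (\<Sum>k\<in>{n..<m}. Y k \<omega>)"

lemma measurable_block_sum: "block_sum n m \<in> borel_measurable (F m)"
  unfolding block_sum_def
  by (intro borel_measurable_sum) (use measurable_F_mono[OF measurable_Y] in auto)

lemma borel_measurable_block_sum[measurable]: "block_sum n m \<in> borel_measurable M"
  using measurable_F_imp_borel[OF measurable_block_sum] .

lemma block_sum_split: "n \<le> j \<Longrightarrow> j \<le> m \<Longrightarrow> block_sum n m \<omega> = block_sum n j \<omega> + block_sum j m \<omega>"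
  unfolding block_sum_def by (simp add: sum.atLeastLessThan_concat)

lemma integral_mult_block_sum_eq_0:
  assumes "Z \<in> borel_measurable (F j)" and "integrable M (\<lambda>\<omega>. (Z \<omega>)\<^sup>2)"
  shows "(\<integral>\<omega>. Z \<omega> * block_sum j m \<omega> \<partial>M) = 0"
proof -
  have [measurable]: "Z \<in> borel_measurable M" using measurable_F_imp_borel[OF assms(1)] .
  have "(\<integral>\<omega>. Z \<omega> * block_sum j m \<omega> \<partial>M) = (\<Sum>k\<in>{j..<m}. \<integral>\<omega>. Z \<omega> * Y k \<omega> \<partial>M)"
    unfolding block_sum_def sum_distrib_left using assms(2) integrable_Y_sq
    by (intro Bochner_Integration.integral_sum integrable_mult_of_square_integrable) auto
  also have "\<dots> = 0" using integral_mult_Y_eq_0[OF assms] by simp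
  finally show ?thesis .
qed

lemma integral_block_sum_sq:
  assumes "n \<le> m"
  shows "integrable M (\<lambda>\<omega>. (block_sum n m \<omega>)\<^sup>2)"
    and "(\<integral>\<omega>. (block_sum n m \<omega>)\<^sup>2 \<partial>M) = (\<Sum>k\<in>{n..<m}. \<integral>\<omega>. (Y k \<omega>)\<^sup>2 \<partial>M)"
  using assms
proof (induction m rule: dec_induct)
  case (step m)
  have "block_sum n (Suc m) \<omega> = block_sum n m \<omega> + Y m \<omega>" for \<omega>
    unfolding block_sum_def using step(1) by simp
  then have sq: "(\<lambda>\<omega>. (block_sum n (Suc m) \<omega>)\<^sup>2) =
      (\<lambda>\<omega>. (block_sum n m \<omega>)\<^sup>2 + 2 * (block_sum n m \<omega> * Y m \<omega>) + (Y m \<omega>)\<^sup>2)"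
    by (simp add: power2_eq_square algebra_simps)
  have cross: "integrable M (\<lambda>\<omega>. block_sum n m \<omega> * Y m \<omega>)"
    using step(3) integrable_Y_sq by (intro integrable_mult_of_square_integrable) auto
  have "(\<integral>\<omega>. block_sum n m \<omega> * Y m \<omega> \<partial>M) = 0"
    using integral_mult_Y_eq_0[OF measurable_block_sum step(3)] by simp
  then show "integrable M (\<lambda>\<omega>. (block_sum n (Suc m) \<omega>)\<^sup>2)"
    and "(\<integral>\<omega>. (block_sum n (Suc m) \<omega>)\<^sup>2 \<partial>M) = (\<Sum>k\<in>{n..<Suc m}. \<integral>\<omega>. (Y k \<omega>)\<^sup>2 \<partial>M)"
    unfolding sq using step(1,3,4) cross integrable_Y_sq by simp_all
qed (simp_all add: block_sum_def)

lemma integrable_block_sum_sq: "integrable M (\<lambda>\<omega>. (block_sum n m \<omega>)\<^sup>2)"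
proof (cases "n \<le> m")
  case True
  then show ?thesis by (rule integral_block_sum_sq(1))
next
  case False
  then show ?thesis by (simp add: block_sum_def)
qed

lemma integral_block_sum_sq_le_tail:
  "(\<integral>\<omega>. (block_sum n m \<omega>)\<^sup>2 \<partial>M) \<le> (\<Sum>k. \<integral>\<omega>. (Y (k + n) \<omega>)\<^sup>2 \<partial>M)"
proof (cases "n \<le> m")
  case True
  have "{n..<m} = {0 + n..<(m - n) + n}" using True by simp
  then have "(\<Sum>k\<in>{n..<m}. \<integral>\<omega>. (Y k \<omega>)\<^sup>2 \<partial>M) = (\<Sum>k<m - n. \<integral>\<omega>. (Y (k + n) \<omega>)\<^sup>2 \<partial>M)"
    by (simp only: sum.shift_bounds_nat_ivl atLeast0LessThan)
  also have "\<dots> \<le> (\<Sum>k. \<integral>\<omega>. (Y (k + n) \<omega>)\<^sup>2 \<partial>M)"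
    by (intro sum_le_suminf summable_ignore_initial_segment summable_Y_sq) auto
  finally show ?thesis using integral_block_sum_sq(2)[OF True] by simp
next
  case False
  then show ?thesis
    by (simp add: block_sum_def) (intro suminf_nonneg summable_ignore_initial_segment summable_Y_sq, simp)
qed

definition first_exit :: "nat \<Rightarrow> real \<Rightarrow> nat \<Rightarrow> 'a set" where
  "first_exit n l j = {\<omega> \<in> space M. l \<le> \<bar>block_sum n j \<omega>\<bar> \<and> (\<forall>i\<in>{n..<j}. \<bar>block_sum n i \<omega>\<bar> < l)}"

lemma first_exit_in_F: "first_exit n l j \<in> sets (F j)"
proof -
  have [measurable]: "Measurable.pred (F j) (\<lambda>\<omega>. \<forall>i\<in>{n..<j}. \<bar>block_sum n i \<omega>\<bar> < l)"
  proof (rule pred_intros_finite(3))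
    fix i assume "i \<in> {n..<j}"
    then have [measurable]: "block_sum n i \<in> borel_measurable (F j)"
      using measurable_F_mono[OF measurable_block_sum, of i j] by simp
    show "Measurable.pred (F j) (\<lambda>\<omega>. \<bar>block_sum n i \<omega>\<bar> < l)" by measurable
  qed simp
  have [measurable]: "block_sum n j \<in> borel_measurable (F j)" by (rule measurable_block_sum)
  have "first_exit n l j =
      {\<omega> \<in> space (F j). l \<le> \<bar>block_sum n j \<omega>\<bar> \<and> (\<forall>i\<in>{n..<j}. \<bar>block_sum n i \<omega>\<bar> < l)}"
    using subalgebra_F[of j] by (simp add: subalgebra_def first_exit_def)
  then show ?thesis by simp
qed

lemma first_exit_in_sets[measurable]: "first_exit n l j \<in> sets M"
  by (meson first_exit_in_F subalgebra_F subalgebra_def subsetD)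

lemma disjoint_family_on_first_exit: "disjoint_family_on (first_exit n l) {n..}"
  unfolding disjoint_family_on_def first_exit_def
  by (auto simp: not_le) (meson atLeastLessThan_iff linorder_neqE_nat not_less)+

lemma UN_first_exit:
  "(\<Union>j\<in>{n..m}. first_exit n l j) = {\<omega> \<in> space M. \<exists>j\<in>{n..m}. l \<le> \<bar>block_sum n j \<omega>\<bar>}"
proof (intro equalityI subsetI)
  fix \<omega> assume "\<omega> \<in> {\<omega> \<in> space M. \<exists>j\<in>{n..m}. l \<le> \<bar>block_sum n j \<omega>\<bar>}"
  then obtain j where j: "\<omega> \<in> space M" "j \<in> {n..m}" "l \<le> \<bar>block_sum n j \<omega>\<bar>" by auto
  define j0 where "j0 = (LEAST j. n \<le> j \<and> l \<le> \<bar>block_sum n j \<omega>\<bar>)"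
  have j0: "n \<le> j0 \<and> l \<le> \<bar>block_sum n j0 \<omega>\<bar>"
    unfolding j0_def by (rule LeastI[of _ j]) (use j in auto)
  have "j0 \<le> j" unfolding j0_def by (rule Least_le) (use j in auto)
  have "\<bar>block_sum n i \<omega>\<bar> < l" if "i \<in> {n..<j0}" for i
    using that not_less_Least[of i "\<lambda>j. n \<le> j \<and> l \<le> \<bar>block_sum n j \<omega>\<bar>"] unfolding j0_def by auto
  then have "\<omega> \<in> first_exit n l j0" using j0 j unfolding first_exit_def by auto
  then show "\<omega> \<in> (\<Union>j\<in>{n..m}. first_exit n l j)" using j0 \<open>j0 \<le> j\<close> j by auto
qed (auto simp: first_exit_def)

lemma measure_first_exit_le:
  assumes "n \<le> j" "j \<le> m" "0 \<le> l"
  shows "l\<^sup>2 * measure M (first_exit n l j) \<le> (\<integral>\<omega>. indicator (first_exit n l j) \<omega> * (block_sum n m \<omega>)\<^sup>2 \<partial>M)"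
proof -
  let ?E = "first_exit n l j"
  define Z where "Z \<omega> = indicator ?E \<omega> * block_sum n j \<omega>" for \<omega>
  have Z_meas: "Z \<in> borel_measurable (F j)"
    unfolding Z_def using measurable_block_sum first_exit_in_F by measurable
  have [measurable]: "Z \<in> borel_measurable M" using measurable_F_imp_borel[OF Z_meas] .
  have "(Z \<omega>)\<^sup>2 = indicator ?E \<omega> * (block_sum n j \<omega>)\<^sup>2" for \<omega>
    by (simp add: Z_def indicator_def)
  then have Z_sq: "integrable M (\<lambda>\<omega>. (Z \<omega>)\<^sup>2)"
    using integrable_mult_indicator[OF _ integrable_block_sum_sq, of ?E n j] by simp
  have cross: "integrable M (\<lambda>\<omega>. Z \<omega> * block_sum j m \<omega>)"
    using Z_sq integrable_block_sum_sq by (intro integrable_mult_of_square_integrable) auto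
  have ind: "integrable M (\<lambda>\<omega>. indicator ?E \<omega> * l\<^sup>2)"
    using integrable_mult_indicator[of ?E M "\<lambda>_. l\<^sup>2"] by simp
  have pointwise: "indicator ?E \<omega> * l\<^sup>2 + 2 * (Z \<omega> * block_sum j m \<omega>) \<le> indicator ?E \<omega> * (block_sum n m \<omega>)\<^sup>2"
    for \<omega>
  proof (cases "\<omega> \<in> ?E")
    case True
    then have "l \<le> \<bar>block_sum n j \<omega>\<bar>" by (simp add: first_exit_def)
    then have "l\<^sup>2 \<le> \<bar>block_sum n j \<omega>\<bar>\<^sup>2" using \<open>0 \<le> l\<close> by (rule power_mono)
    moreover have "(block_sum n m \<omega>)\<^sup>2 =
        (block_sum n j \<omega>)\<^sup>2 + 2 * (block_sum n j \<omega> * block_sum j m \<omega>) + (block_sum j m \<omega>)\<^sup>2"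
      using block_sum_split[OF assms(1,2)] by (simp add: power2_eq_square algebra_simps)
    ultimately show ?thesis
      using True unfolding Z_def by simp (use zero_le_power2[of "block_sum j m \<omega>"] in linarith)
  qed (simp add: Z_def)
  have "l\<^sup>2 * measure M ?E = measure M ?E * l\<^sup>2" by (rule mult.commute)
  \<comment> \<open>\<open>Z\<close> is \<open>F j\<close>-measurable, so the cross term is orthogonal to the increments after \<open>j\<close>.\<close>
  also have "\<dots> = (\<integral>\<omega>. indicator ?E \<omega> * l\<^sup>2 + 2 * (Z \<omega> * block_sum j m \<omega>) \<partial>M)"
    using integral_mult_block_sum_eq_0[OF Z_meas Z_sq, of m] ind cross by simp
  also have "\<dots> \<le> (\<integral>\<omega>. indicator ?E \<omega> * (block_sum n m \<omega>)\<^sup>2 \<partial>M)"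
  proof (rule integral_mono)
    show "integrable M (\<lambda>\<omega>. indicator ?E \<omega> * (block_sum n m \<omega>)\<^sup>2)"
      using integrable_mult_indicator[OF _ integrable_block_sum_sq] by simp
  qed (use pointwise ind cross in auto)
  finally show ?thesis .
qed

lemma kolmogorov_maximal_inequality:
  assumes "n \<le> m" "0 \<le> l"
  shows "l\<^sup>2 * measure M {\<omega> \<in> space M. \<exists>j\<in>{n..m}. l \<le> \<bar>block_sum n j \<omega>\<bar>}
    \<le> (\<integral>\<omega>. (block_sum n m \<omega>)\<^sup>2 \<partial>M)"
proof -
  let ?E = "first_exit n l"
  have disjoint: "disjoint_family_on ?E {n..m}"
    using disjoint_family_on_first_exit by (rule disjoint_family_on_mono[rotated]) auto
  have integrable: "integrable M (\<lambda>\<omega>. indicator (?E j) \<omega> * (block_sum n m \<omega>)\<^sup>2)" for j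
    using integrable_mult_indicator[OF _ integrable_block_sum_sq] by simp
  have "l\<^sup>2 * measure M (\<Union>j\<in>{n..m}. ?E j) = (\<Sum>j\<in>{n..m}. l\<^sup>2 * measure M (?E j))"
    using disjoint by (simp add: finite_measure_finite_Union sum_distrib_left image_subset_iff)
  also have "\<dots> \<le> (\<Sum>j\<in>{n..m}. \<integral>\<omega>. indicator (?E j) \<omega> * (block_sum n m \<omega>)\<^sup>2 \<partial>M)"
    using assms by (intro sum_mono measure_first_exit_le) auto
  also have "\<dots> = (\<integral>\<omega>. indicator (\<Union>j\<in>{n..m}. ?E j) \<omega> * (block_sum n m \<omega>)\<^sup>2 \<partial>M)"
    using integrable disjoint
    by (simp add: Bochner_Integration.integral_sum[symmetric] indicator_UN_disjoint sum_distrib_right)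
  also have "\<dots> \<le> (\<integral>\<omega>. (block_sum n m \<omega>)\<^sup>2 \<partial>M)"
  proof (rule integral_mono)
    have "(\<Union>j\<in>{n..m}. ?E j) \<in> sets M" by measurable
    then show "integrable M (\<lambda>\<omega>. indicator (\<Union>j\<in>{n..m}. ?E j) \<omega> * (block_sum n m \<omega>)\<^sup>2)"
      using integrable_mult_indicator[OF _ integrable_block_sum_sq] by simp
  qed (auto simp: indicator_def integrable_block_sum_sq)
  finally show ?thesis by (simp only: UN_first_exit)
qed

lemma measure_block_sum_exceeds_le:
  assumes "0 < l"
  shows "measure M {\<omega> \<in> space M. \<exists>j\<ge>n. l < \<bar>block_sum n j \<omega>\<bar>}
    \<le> (\<Sum>k. \<integral>\<omega>. (Y (k + n) \<omega>)\<^sup>2 \<partial>M) / l\<^sup>2"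
proof -
  define C where "C m = {\<omega> \<in> space M. \<exists>j\<in>{n..n + m}. l \<le> \<bar>block_sum n j \<omega>\<bar>}" for m
  have "C m \<in> sets M" for m unfolding C_def by measurable
  then have C_sets: "range C \<subseteq> sets M" by auto
  have "incseq C" unfolding C_def incseq_def by force
  have C_le: "measure M (C m) \<le> (\<Sum>k. \<integral>\<omega>. (Y (k + n) \<omega>)\<^sup>2 \<partial>M) / l\<^sup>2" for m
  proof -
    have "l\<^sup>2 * measure M (C m) \<le> (\<Sum>k. \<integral>\<omega>. (Y (k + n) \<omega>)\<^sup>2 \<partial>M)"
      unfolding C_def using kolmogorov_maximal_inequality[of n "n + m" l] integral_block_sum_sq_le_tail[of n "n + m"]
        assms by simp
    then show ?thesis using assms by (simp add: field_simps mult.commute)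
  qed
  have "(\<lambda>m. measure M (C m)) \<longlonglongrightarrow> measure M (\<Union>m. C m)"
    using C_sets \<open>incseq C\<close> by (rule finite_Lim_measure_incseq)
  then have "measure M (\<Union>m. C m) \<le> (\<Sum>k. \<integral>\<omega>. (Y (k + n) \<omega>)\<^sup>2 \<partial>M) / l\<^sup>2"
    by (rule tendsto_upperbound) (use C_le in auto)
  moreover have "{\<omega> \<in> space M. \<exists>j\<ge>n. l < \<bar>block_sum n j \<omega>\<bar>} \<subseteq> (\<Union>m. C m)"
  proof
    fix \<omega> assume "\<omega> \<in> {\<omega> \<in> space M. \<exists>j\<ge>n. l < \<bar>block_sum n j \<omega>\<bar>}"
    then obtain j where "\<omega> \<in> space M" "j \<ge> n" "l < \<bar>block_sum n j \<omega>\<bar>" by auto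
    then have "\<omega> \<in> C (j - n)" unfolding C_def by force
    then show "\<omega> \<in> (\<Union>m. C m)" by blast
  qed
  then have "measure M {\<omega> \<in> space M. \<exists>j\<ge>n. l < \<bar>block_sum n j \<omega>\<bar>} \<le> measure M (\<Union>m. C m)"
    using C_sets by (intro finite_measure_mono) auto
  ultimately show ?thesis by linarith
qed

lemma AE_eventually_block_sum_le:
  assumes "0 < l"
  shows "AE \<omega> in M. \<exists>n. \<forall>j\<ge>n. \<bar>block_sum n j \<omega>\<bar> \<le> l"
proof (rule AE_I')
  define B where "B n = {\<omega> \<in> space M. \<exists>j\<ge>n. l < \<bar>block_sum n j \<omega>\<bar>}" for n
  have B_sets: "B n \<in> sets M" for n unfolding B_def by measurable
  have small: "measure M (\<Inter>n. B n) \<le> 0 + r" if r: "r > 0" for r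
  proof -
    obtain n where n: "norm (\<Sum>k. \<integral>\<omega>. (Y (k + n) \<omega>)\<^sup>2 \<partial>M) < r * l\<^sup>2"
      using suminf_exist_split[OF _ summable_Y_sq, of "r * l\<^sup>2"] r assms by auto
    have "measure M (\<Inter>n. B n) \<le> measure M (B n)" using B_sets by (intro finite_measure_mono) auto
    also have "\<dots> \<le> (\<Sum>k. \<integral>\<omega>. (Y (k + n) \<omega>)\<^sup>2 \<partial>M) / l\<^sup>2"
      unfolding B_def by (rule measure_block_sum_exceeds_le[OF assms])
    also have "\<dots> \<le> r" using n assms by (simp add: field_simps)
    finally show ?thesis by simp
  qed
  have "measure M (\<Inter>n. B n) \<le> 0" by (rule field_le_epsilon[OF small])
  then have "measure M (\<Inter>n. B n) = 0" using measure_nonneg[of M "\<Inter>n. B n"] by linarith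
  then show "(\<Inter>n. B n) \<in> null_sets M"
    using B_sets by (auto simp: emeasure_eq_measure null_sets_def)
  show "{\<omega> \<in> space M. \<not> (\<exists>n. \<forall>j\<ge>n. \<bar>block_sum n j \<omega>\<bar> \<le> l)} \<subseteq> (\<Inter>n. B n)"
    unfolding B_def by (auto simp: not_le)
qed

theorem AE_summable:
  "AE \<omega> in M. summable (\<lambda>n. Y n \<omega>)"
proof -
  have "AE \<omega> in M. \<forall>p::nat. \<exists>n. \<forall>j\<ge>n. \<bar>block_sum n j \<omega>\<bar> \<le> 1 / Suc p"
    by (subst AE_all_countable) (intro allI AE_eventually_block_sum_le, simp)
  then show ?thesis
  proof eventually_elim
    case (elim \<omega>)
    show ?case unfolding summable_Cauchy
    proof (intro allI impI)
      fix e :: real assume "e > 0"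
      then obtain p :: nat where "inverse (Suc p) < e / 2"
        using reals_Archimedean by (metis half_gt_zero)
      then have p: "2 * (1 / Suc p) < e" by (simp add: field_simps)
      obtain n where n: "\<forall>j\<ge>n. \<bar>block_sum n j \<omega>\<bar> \<le> 1 / Suc p" using elim by blast
      have "norm (\<Sum>k\<in>{i..<j}. Y k \<omega>) < e" if "i \<ge> n" for i j
      proof (cases "i \<le> j")
        case True
        then have "(\<Sum>k\<in>{i..<j}. Y k \<omega>) = block_sum n j \<omega> - block_sum n i \<omega>"
          using block_sum_split[OF that True] by (simp add: block_sum_def)
        moreover have "\<bar>block_sum n j \<omega>\<bar> \<le> 1 / Suc p" "\<bar>block_sum n i \<omega>\<bar> \<le> 1 / Suc p"
          using n that True by auto
        ultimately show ?thesis using p by simp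
      qed (use \<open>e > 0\<close> in simp)
      then show "\<exists>N. \<forall>i\<ge>N. \<forall>j. norm (\<Sum>k\<in>{i..<j}. Y k \<omega>) < e" by blast
    qed
  qed
qed

lemma predictable_transform:
  assumes a_meas: "\<And>n. a n \<in> borel_measurable (F n)" and a_bounded: "\<And>n \<omega>. \<bar>a n \<omega>\<bar> \<le> 1"
  shows "square_summable_martingale_differences M F (\<lambda>n \<omega>. a n \<omega> * Y n \<omega>)"
proof -
  have [measurable]: "a n \<in> borel_measurable M" for n using measurable_F_imp_borel[OF a_meas] .
  have abs_le: "\<bar>a n \<omega> * Y n \<omega>\<bar> \<le> \<bar>Y n \<omega>\<bar>" for n \<omega>
    using a_bounded[of n \<omega>] by (simp add: abs_mult mult_left_le_one_le)
  then have sq_le: "(a n \<omega> * Y n \<omega>)\<^sup>2 \<le> (Y n \<omega>)\<^sup>2" for n \<omega>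
    by (simp add: abs_le_square_iff)
  have sq_integrable: "integrable M (\<lambda>\<omega>. (a n \<omega> * Y n \<omega>)\<^sup>2)" for n
  proof (rule Bochner_Integration.integrable_bound[OF integrable_Y_sq[of n]])
    show "AE \<omega> in M. norm ((a n \<omega> * Y n \<omega>)\<^sup>2) \<le> norm ((Y n \<omega>)\<^sup>2)" using sq_le by simp
  qed measurable
  show ?thesis
  proof unfold_locales
    fix n
    show "(\<lambda>\<omega>. a n \<omega> * Y n \<omega>) \<in> borel_measurable (F (Suc n))"
      by (rule borel_measurable_times[OF measurable_F_mono[OF a_meas] measurable_Y]) simp
    have "integrable M (Y n)"
      using square_integrable_imp_integrable[OF borel_measurable_Y integrable_Y_sq] .
    then have "integrable M (\<lambda>\<omega>. a n \<omega> * Y n \<omega>)"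
      by (rule Bochner_Integration.integrable_bound) (use abs_le in auto)
    then have "AE \<omega> in M. real_cond_exp M (F n) (\<lambda>\<omega>. a n \<omega> * Y n \<omega>) \<omega> = a n \<omega> * real_cond_exp M (F n) (Y n) \<omega>"
      using a_meas by (intro sigma_finite_subalgebra.real_cond_exp_mult sigma_finite_subalgebra_F) auto
    then show "AE \<omega> in M. real_cond_exp M (F n) (\<lambda>\<omega>. a n \<omega> * Y n \<omega>) \<omega> = 0"
      using cond_exp_Y[of n] by eventually_elim simp
  next
    show "summable (\<lambda>n. \<integral>\<omega>. (a n \<omega> * Y n \<omega>)\<^sup>2 \<partial>M)"
    proof (rule summable_comparison_test'[OF summable_Y_sq])
      fix n
      show "norm (\<integral>\<omega>. (a n \<omega> * Y n \<omega>)\<^sup>2 \<partial>M) \<le> (\<integral>\<omega>. (Y n \<omega>)\<^sup>2 \<partial>M)"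
        using integral_mono[OF sq_integrable integrable_Y_sq sq_le] by simp
    qed
  qed (fact subalgebra_F sets_F_Suc sq_integrable)+
qed

end

theorem mainTheorem3:
  fixes M :: "'a measure"
    and F :: "nat \<Rightarrow> 'a measure"
    and X T W \<alpha> \<beta> \<gamma> :: "nat \<Rightarrow> 'a \<Rightarrow> real"
    and xs :: real
  assumes "prob_space M"
    and sub: "\<And>n. subalgebra M (F n)"
    and incr: "\<And>n. sets (F n) \<subseteq> sets (F (Suc n))"
    and X_meas: "\<And>n. X n \<in> borel_measurable (F n)"
    and T_meas: "\<And>n. T n \<in> borel_measurable (F n)"
    and W_meas: "\<And>n. W n \<in> borel_measurable (F (Suc n))"
    and rec: "\<And>n \<omega>. \<omega> \<in> space M \<Longrightarrow> X (Suc n) \<omega> = T n \<omega> + W n \<omega>"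
    and W_cond: "\<And>n. AE \<omega> in M. real_cond_exp M (F n) (W n) \<omega> = 0"
    and W_sq: "(\<Sum>n. \<integral>\<^sup>+ \<omega>. ennreal ((W n \<omega>)\<^sup>2) \<partial>M) < \<infinity>"
    and nonneg: "\<And>n \<omega>. \<omega> \<in> space M \<Longrightarrow> \<alpha> n \<omega> \<ge> 0 \<and> \<beta> n \<omega> \<ge> 0 \<and> \<gamma> n \<omega> \<ge> 0"
    and \<alpha>_lim: "AE \<omega> in M. (\<lambda>n. \<alpha> n \<omega>) \<longlonglongrightarrow> 0"
    and \<beta>_sum: "AE \<omega> in M. summable (\<lambda>n. \<beta> n \<omega>)"
    and \<gamma>_sum: "AE \<omega> in M. \<not> summable (\<lambda>n. \<gamma> n \<omega>)"
    and bound: "\<And>n \<omega>. \<omega> \<in> space M \<Longrightarrow>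
        \<bar>T n \<omega> - xs\<bar> \<le> max (\<alpha> n \<omega>) ((1 + \<beta> n \<omega> - \<gamma> n \<omega>) * \<bar>X n \<omega> - xs\<bar>)"
  shows "AE \<omega> in M. (\<lambda>n. X n \<omega>) \<longlonglongrightarrow> xs"
proof -
  interpret filtered_prob_space M F
    by (intro filtered_prob_space.intro filtered_prob_space_axioms.intro) (fact \<open>prob_space M\<close> sub incr)+
  have W_borel[measurable]: "W n \<in> borel_measurable M" for n using measurable_F_imp_borel[OF W_meas] .
  interpret W: square_summable_martingale_differences M F W
    using W_meas W_cond integrable_of_nn_integral_suminf_finite[OF _ _ W_sq]
      summable_integral_of_nn_integral_suminf_finite[OF _ _ W_sq]
    by unfold_locales auto
  have "AE \<omega> in M. summable (\<lambda>n. cutoff_sgn (1 / Suc p) (T n \<omega> - xs) * W n \<omega>)" for p :: nat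
  proof (rule square_summable_martingale_differences.AE_summable, rule W.predictable_transform)
    show "(\<lambda>\<omega>. cutoff_sgn (1 / Suc p) (T n \<omega> - xs)) \<in> borel_measurable (F n)" for n
      unfolding cutoff_sgn_def using T_meas[of n] by measurable
  qed (rule abs_cutoff_sgn_le_1)
  then have "AE \<omega> in M. \<forall>p::nat. summable (\<lambda>n. cutoff_sgn (1 / Suc p) (T n \<omega> - xs) * W n \<omega>)"
    by (simp add: AE_all_countable)
  moreover have "AE \<omega> in M. summable (\<lambda>n. (W n \<omega>)\<^sup>2)"
    using AE_summable_of_nn_integral_suminf_finite[OF _ _ W_sq] by simp
  ultimately show ?thesis
    using \<alpha>_lim \<beta>_sum \<gamma>_sum AE_space
  proof eventually_elim
    case (elim \<omega>)
    show ?case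
    proof (rule tendsto_of_perturbed_contraction)
      show "X (Suc n) \<omega> = T n \<omega> + W n \<omega>" for n using rec[OF elim(6)] .
      show "\<bar>T n \<omega> - xs\<bar> \<le> max (\<alpha> n \<omega>) ((1 + \<beta> n \<omega> - \<gamma> n \<omega>) * \<bar>X n \<omega> - xs\<bar>)" for n
        using bound[OF elim(6)] .
      show "0 \<le> \<alpha> n \<omega> \<and> 0 \<le> \<beta> n \<omega> \<and> 0 \<le> \<gamma> n \<omega>" for n using nonneg[OF elim(6)] .
    qed (use elim in simp_all)
  qed
qed

end
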